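(* Let $\mathcal E$ be a nest on a complex Banach space $X$ and let $\mathcal J$ be a $\mathcal T(\mathcal E)$-bimodule. Then for every $E\in\mathcal E$ the subspace $[\mathcal J E]$ belongs to $\mathcal E$, and the map $\Phi_{\mathcal J}:\mathcal E\to\mathcal E$, $E\mapsto[\mathcal JE]$, is an admissible support function on $\mathcal E$.
   Context: A nest $\mathcal E$ on $X$ is a family of closed linear subspaces of $X$, totally ordered by inclusion, containing $\{0\}$ and $X$, closed under arbitrary meets $\wedge$ (intersections) and joins $\vee$ (norm-closed linear spans of unions). For $E\in\mathcal E$, $E_-=\vee\{F\in\mathcal E: F\subsetneq E\}$. $\mathcal T(\mathcal E)=\{T\in\mathcal B(X): TE\subseteq E\ \forall E\in\mathcal E\}$ is the nest algebra. A $\mathcal T(\mathcal E)$-bimodule is a linear subspace $\mathcal J\subseteq\mathcal B(X)$ with $\mathcal T(\mathcal E)\mathcal J\subseteq\mathcal J$ and $\mathcal J\mathcal T(\mathcal E)\subseteq\mathcal J$. $[\mathcal JE]$ is the norm-closed linear span of $\{Tx: T\in\mathcal J, x\in E\}$. A support function on $\mathcal E$ is an inclusion-preserving map $\Phi:\mathcal E\to\mathcal E$; it is admissible if for every $N\in\mathcal E\setminus\{\{0\}\}$, $\vee_{E\in\mathcal E, E\subsetneq N}\Phi(E)=\Phi(N_-)$. *)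

theory Defs
  imports "HOL-Analysis.Analysis"
begin

text \<open>Complex Banach spaces: a real Banach space carrying a compatible complex
scalar multiplication (the distribution has no complex-vector-space class).\<close>

class complex_banach = banach +
  fixes scaleC :: "complex \<Rightarrow> 'a \<Rightarrow> 'a" (infixr "*\<^sub>C" 75)
  assumes scaleC_add_right: "a *\<^sub>C (x + y) = a *\<^sub>C x + a *\<^sub>C y"
    and scaleC_add_left: "(a + b) *\<^sub>C x = a *\<^sub>C x + b *\<^sub>C x"
    and scaleC_scaleC: "a *\<^sub>C (b *\<^sub>C x) = (a * b) *\<^sub>C x"
    and scaleC_one: "1 *\<^sub>C x = x"
    and scaleR_scaleC: "scaleR r x = (complex_of_real r) *\<^sub>C x"
    and norm_scaleC: "norm (a *\<^sub>C x) = cmod a * norm x"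

definition csubspace :: "'a::complex_banach set \<Rightarrow> bool" where
  "csubspace S \<longleftrightarrow> 0 \<in> S \<and> (\<forall>x\<in>S. \<forall>y\<in>S. x + y \<in> S) \<and> (\<forall>c. \<forall>x\<in>S. c *\<^sub>C x \<in> S)"

definition cspan :: "'a::complex_banach set \<Rightarrow> 'a set" where
  "cspan S = \<Inter>{V. csubspace V \<and> S \<subseteq> V}"

definition closed_span :: "'a::complex_banach set \<Rightarrow> 'a set" where
  "closed_span S = closure (cspan S)"

definition join :: "'a::complex_banach set set \<Rightarrow> 'a set" where
  "join F = closed_span (\<Union>F)"

definition bounded_ops :: "('a::complex_banach \<Rightarrow> 'a) set" where
  "bounded_ops = {T. bounded_linear T \<and> (\<forall>c x. T (c *\<^sub>C x) = c *\<^sub>C T x)}"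

definition nest :: "'a::complex_banach set set \<Rightarrow> bool" where
  "nest \<E> \<longleftrightarrow>
     (\<forall>E\<in>\<E>. closed E \<and> csubspace E) \<and>
     (\<forall>E\<in>\<E>. \<forall>F\<in>\<E>. E \<subseteq> F \<or> F \<subseteq> E) \<and>
     {0} \<in> \<E> \<and> UNIV \<in> \<E> \<and>
     (\<forall>\<F>. \<F> \<subseteq> \<E> \<longrightarrow> \<Inter>\<F> \<in> \<E>) \<and>
     (\<forall>\<F>. \<F> \<subseteq> \<E> \<longrightarrow> join \<F> \<in> \<E>)"

definition pred_elem :: "'a::complex_banach set set \<Rightarrow> 'a set \<Rightarrow> 'a set" where
  "pred_elem \<E> E = join {F \<in> \<E>. F \<subset> E}"

definition nest_algebra :: "'a::complex_banach set set \<Rightarrow> ('a \<Rightarrow> 'a) set" where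
  "nest_algebra \<E> = {T \<in> bounded_ops. \<forall>E\<in>\<E>. T ` E \<subseteq> E}"

definition bimodule :: "'a::complex_banach set set \<Rightarrow> ('a \<Rightarrow> 'a) set \<Rightarrow> bool" where
  "bimodule \<E> \<J> \<longleftrightarrow>
     \<J> \<subseteq> bounded_ops \<and>
     (\<lambda>x. 0) \<in> \<J> \<and>
     (\<forall>S\<in>\<J>. \<forall>T\<in>\<J>. (\<lambda>x. S x + T x) \<in> \<J>) \<and>
     (\<forall>c. \<forall>T\<in>\<J>. (\<lambda>x. c *\<^sub>C T x) \<in> \<J>) \<and>
     (\<forall>A\<in>nest_algebra \<E>. \<forall>T\<in>\<J>. A \<circ> T \<in> \<J> \<and> T \<circ> A \<in> \<J>)"

text \<open>[J E]: the norm-closed linear span of {T x. T in J, x in E}.\<close>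
definition range_on :: "('a::complex_banach \<Rightarrow> 'a) set \<Rightarrow> 'a set \<Rightarrow> 'a set" where
  "range_on \<J> E = closed_span {T x | T x. T \<in> \<J> \<and> x \<in> E}"

definition support_function :: "'a::complex_banach set set \<Rightarrow> ('a set \<Rightarrow> 'a set) \<Rightarrow> bool" where
  "support_function \<E> \<Phi> \<longleftrightarrow>
     (\<forall>E\<in>\<E>. \<Phi> E \<in> \<E>) \<and> (\<forall>E\<in>\<E>. \<forall>F\<in>\<E>. E \<subseteq> F \<longrightarrow> \<Phi> E \<subseteq> \<Phi> F)"

definition admissible :: "'a::complex_banach set set \<Rightarrow> ('a set \<Rightarrow> 'a set) \<Rightarrow> bool" where
  "admissible \<E> \<Phi> \<longleftrightarrow> support_function \<E> \<Phi> \<and>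
     (\<forall>N\<in>\<E>. N \<noteq> {0} \<longrightarrow> join (\<Phi> ` {E \<in> \<E>. E \<subset> N}) = \<Phi> (pred_elem \<E> N))"

end

theory Submission
  imports Defs
begin

text \<open>The subspace \<open>[\<J>E]\<close> is closed and, because \<open>\<J>\<close> is a left \<open>\<T>(\<E>)\<close>-module and
operators are continuous, invariant under the nest algebra. Every closed invariant subspace
\<open>M\<close> of \<open>\<T>(\<E>)\<close> belongs to \<open>\<E>\<close>: if \<open>f\<close> is a bounded functional vanishing on \<open>F\<close> and \<open>y\<close> lies
in every nest element not contained in \<open>F\<close>, the rank-one operator \<open>z \<mapsto> f z \<cdot> y\<close> lies
in \<open>\<T>(\<E>)\<close>; feeding vectors of \<open>M\<close> into such operators, with functionals supplied by
Hahn-Banach, shows that \<open>M\<close> is the join of the nest elements it contains.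
Admissibility is the identity \<open>[\<J>(\<Or>\<C>)] = \<Or>{[\<J>E] | E \<in> \<C>}\<close>, again by continuity.\<close>

lemma scaleC_zero_left [simp]: "(0::complex) *\<^sub>C x = 0"
  using scaleR_scaleC[of 0 x] by simp

lemma scaleC_scaleR_commute: "c *\<^sub>C (r *\<^sub>R x) = r *\<^sub>R (c *\<^sub>C (x::'a::complex_banach))"
  by (simp add: scaleR_scaleC scaleC_scaleC mult.commute)

lemma bounded_linear_scaleC: "bounded_linear (\<lambda>x::'a::complex_banach. c *\<^sub>C x)"
proof (rule bounded_linear_intro[where K="cmod c"])
  show "\<And>x y. c *\<^sub>C (x + y) = c *\<^sub>C x + c *\<^sub>C y" by (rule scaleC_add_right)
  show "\<And>r x. c *\<^sub>C (r *\<^sub>R x) = r *\<^sub>R (c *\<^sub>C x)" by (rule scaleC_scaleR_commute)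
  show "\<And>x. norm (c *\<^sub>C x) \<le> norm x * cmod c" by (simp add: norm_scaleC)
qed

lemma scaleC_Re_Im: "c *\<^sub>C x = Re c *\<^sub>R x + Im c *\<^sub>R (\<i> *\<^sub>C (x::'a::complex_banach))"
proof -
  have "c = complex_of_real (Re c) + complex_of_real (Im c) * \<i>" by (simp add: complex_eq_iff)
  then have "c *\<^sub>C x = complex_of_real (Re c) *\<^sub>C x + (complex_of_real (Im c) * \<i>) *\<^sub>C x"
    by (metis scaleC_add_left)
  then show ?thesis by (simp add: scaleR_scaleC scaleC_scaleC)
qed

lemma csubspace_iff: "csubspace S \<longleftrightarrow> subspace S \<and> (\<forall>x\<in>S. \<i> *\<^sub>C x \<in> S)"
proof
  assume "csubspace S" then show "subspace S \<and> (\<forall>x\<in>S. \<i> *\<^sub>C x \<in> S)"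
    unfolding csubspace_def subspace_def by (metis scaleR_scaleC)
next
  assume S: "subspace S \<and> (\<forall>x\<in>S. \<i> *\<^sub>C x \<in> S)"
  show "csubspace S" unfolding csubspace_def
  proof (intro conjI ballI allI)
    show "0 \<in> S" using S by (simp add: subspace_0)
    show "x + y \<in> S" if "x \<in> S" "y \<in> S" for x y using S that by (simp add: subspace_add)
    show "c *\<^sub>C x \<in> S" if "x \<in> S" for c x
      using S that by (subst scaleC_Re_Im) (simp add: subspace_add subspace_scale)
  qed
qed

section \<open>Closed linear spans\<close>

lemma closure_add_closed:
  fixes S :: "'a::real_normed_vector set"
  assumes "\<forall>x\<in>S. \<forall>y\<in>S. x + y \<in> S" "x \<in> closure S" "y \<in> closure S"
  shows "x + y \<in> closure S"
proof -
  obtain f where f: "\<forall>n. f n \<in> S" "f \<longlonglongrightarrow> x" using assms(2) unfolding closure_sequential by blast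
  obtain g where g: "\<forall>n. g n \<in> S" "g \<longlonglongrightarrow> y" using assms(3) unfolding closure_sequential by blast
  have "(\<lambda>n. f n + g n) \<longlonglongrightarrow> x + y" using f g by (intro tendsto_add) auto
  moreover have "\<forall>n. f n + g n \<in> S" using f g assms(1) by auto
  ultimately show ?thesis unfolding closure_sequential by (intro exI[of _ "\<lambda>n. f n + g n"]) simp
qed

lemma csubspace_closure: "csubspace S \<Longrightarrow> csubspace (closure S)"
proof -
  assume S: "csubspace S"
  have scale: "(\<lambda>x. c *\<^sub>C x) ` closure S \<subseteq> closure S" for c
  proof (rule image_closure_subset)
    show "continuous_on (closure S) (\<lambda>x. c *\<^sub>C x)"
      using bounded_linear_scaleC linear_continuous_on by blast
    show "(\<lambda>x. c *\<^sub>C x) ` S \<subseteq> closure S" using S closure_subset unfolding csubspace_def by blast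
  qed simp
  show ?thesis unfolding csubspace_def
  proof (intro conjI ballI allI)
    show "0 \<in> closure S" using S closure_subset unfolding csubspace_def by blast
    show "x + y \<in> closure S" if "x \<in> closure S" "y \<in> closure S" for x y
      using closure_add_closed[OF _ that] S unfolding csubspace_def by blast
    show "c *\<^sub>C x \<in> closure S" if "x \<in> closure S" for c x using scale that by blast
  qed
qed

lemma csubspace_cspan: "csubspace (cspan S)"
  unfolding cspan_def csubspace_def by auto

lemma cspan_superset: "S \<subseteq> cspan S"
  unfolding cspan_def by auto

lemma cspan_minimal: "S \<subseteq> V \<Longrightarrow> csubspace V \<Longrightarrow> cspan S \<subseteq> V"
  unfolding cspan_def by auto

lemma closed_closed_span: "closed (closed_span S)"
  unfolding closed_span_def by simp

lemma csubspace_closed_span: "csubspace (closed_span S)"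
  unfolding closed_span_def by (simp add: csubspace_closure csubspace_cspan)

lemma closed_span_superset: "S \<subseteq> closed_span S"
  unfolding closed_span_def using cspan_superset closure_subset by blast

lemma closed_span_minimal: "S \<subseteq> V \<Longrightarrow> csubspace V \<Longrightarrow> closed V \<Longrightarrow> closed_span S \<subseteq> V"
  unfolding closed_span_def by (meson closure_minimal cspan_minimal)

lemma closed_span_mono: "S \<subseteq> V \<Longrightarrow> closed_span S \<subseteq> closed_span V"
  by (meson closed_closed_span closed_span_minimal closed_span_superset csubspace_closed_span
      order_trans)

lemma bounded_ops_image_closed_span:
  assumes "T \<in> bounded_ops"
  shows "T ` closed_span S \<subseteq> closed_span (T ` S)"
proof -
  have lin: "bounded_linear T" and hom: "\<And>c x. T (c *\<^sub>C x) = c *\<^sub>C T x"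
    using assms by (auto simp: bounded_ops_def)
  have "csubspace (T -` closed_span (T ` S))"
    using csubspace_closed_span[of "T ` S"] lin hom
    unfolding csubspace_def by (auto simp: linear_simps)
  moreover have "S \<subseteq> T -` closed_span (T ` S)" using closed_span_superset by blast
  ultimately have "T ` cspan S \<subseteq> closed_span (T ` S)" using cspan_minimal by blast
  then show ?thesis unfolding closed_span_def[of S]
    by (intro image_closure_subset) (auto intro: linear_continuous_on lin simp: closed_closed_span)
qed

section \<open>Hahn-Banach separation\<close>

text \<open>A real linear functional dominated by \<open>C \<parallel>\<cdot>\<parallel>\<close> on a subspace is encoded by its graph,
a subspace of \<open>X \<times> \<real>\<close>; this keeps domains implicit and makes Zorn's lemma a statement
about sets.\<close>

definition dominated_graph :: "real \<Rightarrow> ('a::real_normed_vector \<times> real) set \<Rightarrow> bool" where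
  "dominated_graph C G \<longleftrightarrow> subspace G \<and> (\<forall>x a. (x, a) \<in> G \<longrightarrow> a \<le> C * norm x)"

definition graph_extension :: "('a::real_vector \<times> real) set \<Rightarrow> 'a \<Rightarrow> real \<Rightarrow> ('a \<times> real) set" where
  "graph_extension G z c = {(x + t *\<^sub>R z, a + t * c) | x a t. (x, a) \<in> G}"

lemma dominated_graph_functional:
  assumes "dominated_graph C G" "(x, a) \<in> G" "(x, b) \<in> G"
  shows "a = b"
proof -
  have G: "subspace G" and dom: "\<And>x a. (x, a) \<in> G \<Longrightarrow> a \<le> C * norm x"
    using assms(1) by (auto simp: dominated_graph_def)
  have "(x, a) - (x, b) \<in> G" "(x, b) - (x, a) \<in> G"
    using subspace_diff[OF G assms(2,3)] subspace_diff[OF G assms(3,2)] by auto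
  then show ?thesis using dom[of 0 "a - b"] dom[of 0 "b - a"] by simp
qed

lemma graph_extension_superset: "G \<subseteq> graph_extension G z c"
  unfolding graph_extension_def by (force intro: exI[of _ 0])

lemma subspace_graph_extension:
  assumes G: "subspace G"
  shows "subspace (graph_extension G z c)"
  unfolding subspace_def
proof (intro conjI ballI allI)
  show "0 \<in> graph_extension G z c"
    using G graph_extension_superset subspace_0 by blast
next
  fix p q assume "p \<in> graph_extension G z c" "q \<in> graph_extension G z c"
  then obtain x a t y b u where p: "p = (x + t *\<^sub>R z, a + t * c)" "(x, a) \<in> G"
    and q: "q = (y + u *\<^sub>R z, b + u * c)" "(y, b) \<in> G"
    unfolding graph_extension_def by blast
  have "(x + y, a + b) \<in> G" using subspace_add[OF G p(2) q(2)] by simp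
  moreover have "p + q = ((x + y) + (t + u) *\<^sub>R z, (a + b) + (t + u) * c)"
    using p q by (simp add: algebra_simps scaleR_add_left)
  ultimately show "p + q \<in> graph_extension G z c" unfolding graph_extension_def by blast
next
  fix r :: real and p assume "p \<in> graph_extension G z c"
  then obtain x a t where p: "p = (x + t *\<^sub>R z, a + t * c)" "(x, a) \<in> G"
    unfolding graph_extension_def by blast
  have "(r *\<^sub>R x, r * a) \<in> G" using subspace_scale[OF G p(2)] by simp
  moreover have "r *\<^sub>R p = (r *\<^sub>R x + (r * t) *\<^sub>R z, r * a + (r * t) * c)"
    using p by (simp add: algebra_simps scaleR_add_right)
  ultimately show "r *\<^sub>R p \<in> graph_extension G z c" unfolding graph_extension_def by blast
qed

text \<open>These are exactly the constraints on the value at \<open>z\<close> that keep the one-dimensional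
extension dominated; they are compatible by the triangle inequality.\<close>

lemma dominated_graph_extension_value:
  assumes "dominated_graph C G" "C \<ge> 0"
  obtains c where "\<And>x a. (x, a) \<in> G \<Longrightarrow> a - C * norm (x - z) \<le> c"
    and "\<And>y b. (y, b) \<in> G \<Longrightarrow> c \<le> C * norm (y + z) - b"
proof -
  have G: "subspace G" and dom: "\<And>x a. (x, a) \<in> G \<Longrightarrow> a \<le> C * norm x"
    using assms(1) by (auto simp: dominated_graph_def)
  have bound: "a - C * norm (x - z) \<le> C * norm (y + z) - b"
    if "(x, a) \<in> G" "(y, b) \<in> G" for x a y b
  proof -
    have "a + b \<le> C * norm (x + y)" using dom subspace_add[OF G that] by simp
    also have "\<dots> \<le> C * (norm (x - z) + norm (y + z))"
      using norm_triangle_ineq[of "x - z" "y + z"] assms(2) by (simp add: mult_left_mono)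
    finally show ?thesis by (simp add: algebra_simps)
  qed
  define L where "L = {a - C * norm (x - z) | x a. (x, a) \<in> G}"
  have G0: "(0, 0) \<in> G" using G subspace_0 by (metis zero_prod_def)
  then have L: "L \<noteq> {}" "bdd_above L"
    unfolding L_def bdd_above_def using bound[OF _ G0] by auto
  show ?thesis
  proof (rule that)
    show "a - C * norm (x - z) \<le> Sup L" if "(x, a) \<in> G" for x a
      using that by (intro cSup_upper[OF _ L(2)]) (auto simp: L_def)
    show "Sup L \<le> C * norm (y + z) - b" if "(y, b) \<in> G" for y b
      using that bound by (intro cSup_least[OF L(1)]) (auto simp: L_def)
  qed
qed

lemma dominated_graph_extension:
  assumes G: "dominated_graph C G"
    and lower: "\<And>x a. (x, a) \<in> G \<Longrightarrow> a - C * norm (x - z) \<le> c"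
    and upper: "\<And>y b. (y, b) \<in> G \<Longrightarrow> c \<le> C * norm (y + z) - b"
  shows "dominated_graph C (graph_extension G z c)"
proof -
  have sub: "subspace G" and dom: "\<And>x a. (x, a) \<in> G \<Longrightarrow> a \<le> C * norm x"
    using G by (auto simp: dominated_graph_def)
  have "a + t * c \<le> C * norm (x + t *\<^sub>R z)" if xa: "(x, a) \<in> G" for x a t
  proof (cases t "0::real" rule: linorder_cases)
    case equal then show ?thesis using dom xa by simp
  next
    case greater
    have "(inverse t *\<^sub>R x, inverse t * a) \<in> G"
      using subspace_scale[OF sub xa, of "inverse t"] by (simp only: scaleR_Pair real_scaleR_def)
    moreover have "inverse t *\<^sub>R x + z = inverse t *\<^sub>R (x + t *\<^sub>R z)"
      using greater by (simp add: scaleR_add_right)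
    ultimately have "c \<le> C * norm (inverse t *\<^sub>R (x + t *\<^sub>R z)) - inverse t * a"
      using upper by metis
    then have "c \<le> C * (inverse t * norm (x + t *\<^sub>R z)) - inverse t * a" using greater by simp
    then show ?thesis using greater by (simp add: field_simps)
  next
    case less
    have "(inverse (- t) *\<^sub>R x, inverse (- t) * a) \<in> G"
      using subspace_scale[OF sub xa, of "inverse (- t)"] by (simp only: scaleR_Pair real_scaleR_def)
    moreover have "inverse (- t) *\<^sub>R x - z = inverse (- t) *\<^sub>R (x + t *\<^sub>R z)"
      using less by (simp add: scaleR_add_right)
    ultimately have "inverse (- t) * a - C * norm (inverse (- t) *\<^sub>R (x + t *\<^sub>R z)) \<le> c"
      using lower by metis
    then have "inverse (- t) * a - C * (inverse (- t) * norm (x + t *\<^sub>R z)) \<le> c"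
      using less by simp
    then show ?thesis using less by (simp add: field_simps)
  qed
  then show ?thesis
    using subspace_graph_extension[OF sub]
    unfolding dominated_graph_def graph_extension_def by blast
qed

lemma dominated_graph_Union_chain:
  assumes "Ch \<noteq> {}" "chain\<^sub>\<subseteq> Ch" "\<And>G. G \<in> Ch \<Longrightarrow> dominated_graph C G"
  shows "dominated_graph C (\<Union>Ch)"
proof -
  have "subspace (\<Union>Ch)" unfolding subspace_def
  proof (intro conjI ballI allI)
    show "0 \<in> \<Union>Ch" using assms(1,3) subspace_0 unfolding dominated_graph_def by blast
  next
    fix p q assume "p \<in> \<Union>Ch" "q \<in> \<Union>Ch"
    then obtain X Y where XY: "X \<in> Ch" "Y \<in> Ch" "p \<in> X" "q \<in> Y" by blast
    then have "X \<subseteq> Y \<or> Y \<subseteq> X" using assms(2) unfolding chain_subset_def by blast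
    then have "p \<in> X \<and> q \<in> X \<or> p \<in> Y \<and> q \<in> Y" using XY by blast
    then show "p + q \<in> \<Union>Ch" using XY(1,2) assms(3) subspace_add unfolding dominated_graph_def
      by blast
  next
    fix r :: real and p assume "p \<in> \<Union>Ch"
    then obtain X where "X \<in> Ch" "p \<in> X" by blast
    then show "r *\<^sub>R p \<in> \<Union>Ch" using assms(3) subspace_scale unfolding dominated_graph_def by blast
  qed
  moreover have "a \<le> C * norm x" if xa: "(x, a) \<in> \<Union>Ch" for x a
  proof -
    obtain G where "G \<in> Ch" "(x, a) \<in> G" using xa by blast
    then show ?thesis using assms(3) unfolding dominated_graph_def by blast
  qed
  ultimately show ?thesis unfolding dominated_graph_def by blast
qed

lemma dominated_graph_total_bounded_linear:
  assumes G: "dominated_graph C G" and total: "\<And>z. \<exists>a. (z, a) \<in> G"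
  shows "\<exists>U. bounded_linear U \<and> (\<forall>x a. (x, a) \<in> G \<longrightarrow> U x = a)"
proof -
  have sub: "subspace G" and dom: "\<And>x a. (x, a) \<in> G \<Longrightarrow> a \<le> C * norm x"
    using G by (auto simp: dominated_graph_def)
  define U where "U z = (SOME a. (z, a) \<in> G)" for z
  have UG: "(z, U z) \<in> G" for z unfolding U_def using total someI_ex by metis
  have U_eq: "(z, a) \<in> G \<Longrightarrow> U z = a" for z a using UG dominated_graph_functional[OF G] by blast
  have add: "U (x + y) = U x + U y" for x y
    using U_eq subspace_add[OF sub UG UG] by simp
  have scale: "U (r *\<^sub>R x) = r * U x" for r x
    using U_eq subspace_scale[OF sub UG] by simp
  have "norm (U x) \<le> norm x * C" for x
    using dom[OF UG, of x] dom[OF UG, of "- x"] scale[of "- 1" x] by (simp add: abs_le_iff mult.commute)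
  then have "bounded_linear U"
    by (intro bounded_linear_intro[where K = C]) (use add scale in auto)
  then show ?thesis using U_eq by blast
qed

lemma dominated_graph_extends_bounded_linear:
  assumes G0: "dominated_graph C G0" and C: "C \<ge> 0"
  shows "\<exists>U. bounded_linear U \<and> (\<forall>x a. (x, a) \<in> G0 \<longrightarrow> U x = a)"
proof -
  define A where "A = {G. dominated_graph C G \<and> G0 \<subseteq> G}"
  have "\<forall>Ch\<in>chains A. \<exists>U\<in>A. \<forall>X\<in>Ch. X \<subseteq> U"
  proof
    fix Ch assume Ch: "Ch \<in> chains A"
    show "\<exists>U\<in>A. \<forall>X\<in>Ch. X \<subseteq> U"
    proof (cases "Ch = {}")
      case True then show ?thesis using G0 A_def by auto
    next
      case False
      then have "\<Union>Ch \<in> A"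
        using Ch dominated_graph_Union_chain[of Ch C] unfolding chains_def A_def by blast
      then show ?thesis by blast
    qed
  qed
  then obtain G where GA: "G \<in> A" and maximal: "\<forall>X\<in>A. G \<subseteq> X \<longrightarrow> X = G"
    using Zorn_Lemma2[of A] by blast
  have G: "dominated_graph C G" and G0G: "G0 \<subseteq> G" using GA A_def by auto
  have "\<exists>a. (z, a) \<in> G" for z
  proof (rule ccontr)
    assume none: "\<nexists>a. (z, a) \<in> G"
    obtain c where "\<And>x a. (x, a) \<in> G \<Longrightarrow> a - C * norm (x - z) \<le> c"
      "\<And>y b. (y, b) \<in> G \<Longrightarrow> c \<le> C * norm (y + z) - b"
      using dominated_graph_extension_value[OF G C] by metis
    then have "dominated_graph C (graph_extension G z c)" by (rule dominated_graph_extension[OF G])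
    then have "graph_extension G z c \<in> A"
      using G0G graph_extension_superset[of G z c] unfolding A_def by blast
    then have "graph_extension G z c = G" using maximal graph_extension_superset[of G z c] by blast
    moreover have "(0, 0) \<in> G" using G subspace_0 unfolding dominated_graph_def by (metis zero_prod_def)
    then have "(0 + 1 *\<^sub>R z, 0 + 1 * c) \<in> graph_extension G z c"
      unfolding graph_extension_def by blast
    ultimately show False using none by auto
  qed
  then obtain U where "bounded_linear U" "\<forall>x a. (x, a) \<in> G \<longrightarrow> U x = a"
    using dominated_graph_total_bounded_linear[OF G] by blast
  then show ?thesis using G0G by blast
qed

lemma closed_subspace_separating_functional:
  fixes x :: "'a::real_normed_vector"
  assumes W: "subspace W" "closed W" and x: "x \<notin> W"
  shows "\<exists>U::'a \<Rightarrow> real. bounded_linear U \<and> U x = 1 \<and> (\<forall>w\<in>W. U w = 0)"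
proof -
  define d where "d = infdist x W"
  have W0: "0 \<in> W" using W subspace_0 by blast
  have d: "d > 0" using x W W0 in_closed_iff_infdist_zero[of W x] infdist_nonneg[of x W]
    unfolding d_def by force
  define G where "G = graph_extension (W \<times> {0}) x 1"
  have "subspace G" unfolding G_def
    by (intro subspace_graph_extension subspace_Times W(1)) (simp add: subspace_def)
  moreover have "t \<le> (1 / d) * norm (w + t *\<^sub>R x)" if w: "w \<in> W" for w t
  proof (cases "t > 0")
    case False
    have "0 \<le> (1 / d) * norm (w + t *\<^sub>R x)" using d by simp
    then show ?thesis using False by linarith
  next
    case True
    have "- (inverse t *\<^sub>R w) \<in> W" using W w subspace_neg subspace_scale by blast
    then have "d \<le> dist x (- (inverse t *\<^sub>R w))" unfolding d_def by (rule infdist_le)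
    also have "\<dots> = norm (inverse t *\<^sub>R (w + t *\<^sub>R x))"
      using True by (simp add: dist_norm scaleR_add_right add.commute)
    also have "\<dots> = inverse t * norm (w + t *\<^sub>R x)" using True by simp
    finally show ?thesis using True d by (simp add: field_simps)
  qed
  then have "b \<le> (1 / d) * norm y" if "(y, b) \<in> G" for y b
    using that unfolding G_def graph_extension_def by auto
  ultimately have "dominated_graph (1 / d) G" unfolding dominated_graph_def by blast
  then obtain U where U: "bounded_linear U" "\<forall>y b. (y, b) \<in> G \<longrightarrow> U y = b"
    using dominated_graph_extends_bounded_linear d by fastforce
  have "(x, 1) \<in> G" using W0 unfolding G_def graph_extension_def by force
  moreover have "(w, 0) \<in> G" if "w \<in> W" for w
    using that unfolding G_def graph_extension_def by force
  ultimately show ?thesis using U by blast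
qed
definition bounded_cfunctional :: "('a::complex_banach \<Rightarrow> complex) \<Rightarrow> bool" where
  "bounded_cfunctional f \<longleftrightarrow> (\<forall>a b. f (a + b) = f a + f b) \<and> (\<forall>c z. f (c *\<^sub>C z) = c * f z)
     \<and> (\<exists>K. \<forall>z. cmod (f z) \<le> K * norm z)"

text \<open>The complex functional is recovered from its real part \<open>U\<close> as \<open>U z - \<i> U(\<i> z)\<close>.\<close>

lemma closed_csubspace_separating_functional:
  fixes x :: "'a::complex_banach"
  assumes F: "closed F" "csubspace F" and x: "x \<notin> F"
  shows "\<exists>f. bounded_cfunctional f \<and> f x = 1 \<and> (\<forall>v\<in>F. f v = 0)"
proof -
  have "subspace F" and iF: "\<And>v. v \<in> F \<Longrightarrow> \<i> *\<^sub>C v \<in> F" using F csubspace_iff by blast+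
  then obtain U :: "'a \<Rightarrow> real" where U: "bounded_linear U" "U x = 1" "\<forall>w\<in>F. U w = 0"
    using closed_subspace_separating_functional F(1) x by blast
  interpret U: bounded_linear U by (rule U(1))
  obtain K where K: "\<And>z. norm (U z) \<le> norm z * K" using U.bounded by blast
  define f where "f z = complex_of_real (U z) - \<i> * complex_of_real (U (\<i> *\<^sub>C z))" for z
  have f_add: "f (a + b) = f a + f b" for a b
    unfolding f_def by (simp add: scaleC_add_right U.add algebra_simps)
  have f_scaleC: "f (c *\<^sub>C z) = c * f z" for c z
  proof -
    have "U (c *\<^sub>C z) = Re c * U z + Im c * U (\<i> *\<^sub>C z)"
      by (subst scaleC_Re_Im) (simp add: U.add U.scale)
    moreover have "U (\<i> *\<^sub>C (c *\<^sub>C z)) = - Im c * U z + Re c * U (\<i> *\<^sub>C z)"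
      by (simp add: scaleC_scaleC, subst scaleC_Re_Im) (simp add: U.diff U.scale)
    ultimately show ?thesis unfolding f_def by (simp add: complex_eq_iff algebra_simps)
  qed
  have f_bound: "cmod (f z) \<le> (2 * K) * norm z" for z
  proof -
    have "cmod (f z) \<le> cmod (complex_of_real (U z)) + cmod (\<i> * complex_of_real (U (\<i> *\<^sub>C z)))"
      unfolding f_def by (rule norm_triangle_ineq4)
    also have "\<dots> = norm (U z) + norm (U (\<i> *\<^sub>C z))" by (simp add: norm_mult)
    also have "\<dots> \<le> norm z * K + norm (\<i> *\<^sub>C z) * K" using K by (intro add_mono) auto
    finally show ?thesis by (simp add: norm_scaleC)
  qed
  have fx: "f x \<noteq> 0" unfolding f_def using U(2) by (auto simp: complex_eq_iff)
  define g where "g z = f z / f x" for z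
  have "bounded_cfunctional g" unfolding bounded_cfunctional_def g_def
  proof (intro conjI allI exI)
    show "f (a + b) / f x = f a / f x + f b / f x" for a b by (simp add: f_add add_divide_distrib)
    show "f (c *\<^sub>C z) / f x = c * (f z / f x)" for c z by (simp add: f_scaleC)
    show "cmod (f z / f x) \<le> (2 * K / cmod (f x)) * norm z" for z
      using f_bound[of z] fx by (simp add: norm_divide divide_right_mono)
  qed
  moreover have "g x = 1" unfolding g_def using fx by simp
  moreover have "\<forall>v\<in>F. g v = 0" unfolding g_def f_def using U(3) iF by simp
  ultimately show ?thesis by blast
qed

lemma rank_one_bounded_ops:
  assumes "bounded_cfunctional f"
  shows "(\<lambda>z. f z *\<^sub>C y) \<in> bounded_ops"
proof -
  have f_add: "\<And>a b. f (a + b) = f a + f b" and f_scaleC: "\<And>c z. f (c *\<^sub>C z) = c * f z"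
    using assms by (auto simp: bounded_cfunctional_def)
  obtain K where K: "\<And>z. cmod (f z) \<le> K * norm z" using assms by (auto simp: bounded_cfunctional_def)
  have "bounded_linear (\<lambda>z. f z *\<^sub>C y)"
  proof (rule bounded_linear_intro[where K = "K * norm y"])
    show "f (a + b) *\<^sub>C y = f a *\<^sub>C y + f b *\<^sub>C y" for a b by (simp add: f_add scaleC_add_left)
    show "f (r *\<^sub>R z) *\<^sub>C y = r *\<^sub>R (f z *\<^sub>C y)" for r z
      using f_scaleC[of "complex_of_real r" z] scaleC_scaleC[of "complex_of_real r" "f z" y]
      by (simp add: scaleR_scaleC[of r z] scaleR_scaleC[of r "f z *\<^sub>C y"])
    show "norm (f z *\<^sub>C y) \<le> norm z * (K * norm y)" for z
    proof -
      have "norm y * cmod (f z) \<le> norm y * (K * norm z)" using K[of z] by (simp add: mult_left_mono)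
      then show ?thesis by (simp add: norm_scaleC mult.commute mult.left_commute)
    qed
  qed
  moreover have "f (c *\<^sub>C z) *\<^sub>C y = c *\<^sub>C (f z *\<^sub>C y)" for c z using f_scaleC scaleC_scaleC by metis
  ultimately show ?thesis by (simp add: bounded_ops_def)
qed

section \<open>Invariant subspaces of nest algebras\<close>

lemma nestD:
  assumes "nest \<E>"
  shows "\<And>E. E \<in> \<E> \<Longrightarrow> closed E" "\<And>E. E \<in> \<E> \<Longrightarrow> csubspace E"
    "\<And>E F. E \<in> \<E> \<Longrightarrow> F \<in> \<E> \<Longrightarrow> E \<subseteq> F \<or> F \<subseteq> E"
    "\<And>\<F>. \<F> \<subseteq> \<E> \<Longrightarrow> \<Inter>\<F> \<in> \<E>" "\<And>\<F>. \<F> \<subseteq> \<E> \<Longrightarrow> join \<F> \<in> \<E>"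
  using assms unfolding nest_def by blast+

lemma rank_one_in_nest_algebra:
  assumes N: "nest \<E>" and f: "bounded_cfunctional f" "\<forall>v\<in>F. f v = 0"
    and y: "\<forall>H\<in>\<E>. \<not> H \<subseteq> F \<longrightarrow> y \<in> H"
  shows "(\<lambda>z. f z *\<^sub>C y) \<in> nest_algebra \<E>"
proof -
  have "(\<lambda>z. f z *\<^sub>C y) ` H \<subseteq> H" if H: "H \<in> \<E>" for H
  proof (cases "H \<subseteq> F")
    case True then show ?thesis using f(2) nestD(2)[OF N H] unfolding csubspace_def by auto
  next
    case False then show ?thesis using y H nestD(2)[OF N H] unfolding csubspace_def by blast
  qed
  then show ?thesis using rank_one_bounded_ops[OF f(1)] unfolding nest_algebra_def by blast
qed

lemma invariant_subspace_rank_one: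
  assumes N: "nest \<E>" and inv: "\<forall>A\<in>nest_algebra \<E>. A ` M \<subseteq> M" and x: "x \<in> M"
    and f: "bounded_cfunctional f" "f x = 1" "\<forall>v\<in>F. f v = 0"
    and y: "\<forall>H\<in>\<E>. \<not> H \<subseteq> F \<longrightarrow> y \<in> H"
  shows "y \<in> M"
  using inv x rank_one_in_nest_algebra[OF N f(1,3) y] f(2) scaleC_one by fastforce

lemma nest_element_subset_invariant:
  assumes N: "nest \<E>" and inv: "\<forall>A\<in>nest_algebra \<E>. A ` M \<subseteq> M"
    and x: "x \<in> M" and H: "H \<in> \<E>" "x \<notin> H"
  shows "H \<subseteq> M"
proof
  fix y assume "y \<in> H"
  then have y: "\<forall>H'\<in>\<E>. \<not> H' \<subseteq> H \<longrightarrow> y \<in> H'" using nestD(3)[OF N H(1)] by blast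
  obtain f where "bounded_cfunctional f" "f x = 1" "\<forall>v\<in>H. f v = 0"
    using closed_csubspace_separating_functional nestD(1,2)[OF N H(1)] H(2) by blast
  then show "y \<in> M" using invariant_subspace_rank_one[OF N inv x _ _ _ y] by blast
qed

lemma smallest_nest_element_subset_invariant:
  assumes N: "nest \<E>" and inv: "\<forall>A\<in>nest_algebra \<E>. A ` M \<subseteq> M"
    and x: "x \<in> M" "x \<notin> join {F\<in>\<E>. F \<subseteq> M}"
  shows "\<Inter>{H\<in>\<E>. x \<in> H} \<subseteq> M"
proof
  define L where "L = join {F\<in>\<E>. F \<subseteq> M}"
  have L: "L \<in> \<E>" unfolding L_def by (rule nestD(5)[OF N]) blast
  have below_L: "\<Union>{F\<in>\<E>. F \<subseteq> M} \<subseteq> L" unfolding L_def join_def by (rule closed_span_superset)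
  obtain f where f: "bounded_cfunctional f" "f x = 1" "\<forall>v\<in>L. f v = 0"
    using closed_csubspace_separating_functional nestD(1,2)[OF N L] x(2) L_def by blast
  fix y assume y: "y \<in> \<Inter>{H\<in>\<E>. x \<in> H}"
  have "y \<in> H" if H: "H \<in> \<E>" "\<not> H \<subseteq> L" for H
  proof (rule ccontr)
    assume "y \<notin> H"
    then have "H \<subseteq> M" using nest_element_subset_invariant[OF N inv x(1) H(1)] y H(1) by blast
    then show False using H below_L by blast
  qed
  then show "y \<in> M" using invariant_subspace_rank_one[OF N inv x(1) f] by blast
qed

lemma invariant_subspace_in_nest:
  assumes N: "nest \<E>" and M: "closed M" "csubspace M"
    and inv: "\<forall>A\<in>nest_algebra \<E>. A ` M \<subseteq> M"
  shows "M \<in> \<E>"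
proof -
  define L where "L = join {F\<in>\<E>. F \<subseteq> M}"
  have "L \<subseteq> M" unfolding L_def join_def by (rule closed_span_minimal) (use M in auto)
  have below_L: "\<Union>{F\<in>\<E>. F \<subseteq> M} \<subseteq> L" unfolding L_def join_def by (rule closed_span_superset)
  have "M \<subseteq> L"
  proof
    fix x assume x: "x \<in> M"
    show "x \<in> L"
    proof (rule ccontr)
      assume "x \<notin> L"
      then have "\<Inter>{H\<in>\<E>. x \<in> H} \<subseteq> M"
        using smallest_nest_element_subset_invariant[OF N inv x] L_def by blast
      moreover have "\<Inter>{H\<in>\<E>. x \<in> H} \<in> \<E>" by (rule nestD(4)[OF N]) blast
      ultimately show False using below_L \<open>x \<notin> L\<close> by blast
    qed
  qed
  moreover have "L \<in> \<E>" unfolding L_def by (rule nestD(5)[OF N]) blast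
  ultimately show ?thesis using \<open>L \<subseteq> M\<close> by simp
qed

section \<open>The support function of a bimodule\<close>

lemma range_on_mono: "E \<subseteq> F \<Longrightarrow> range_on \<J> E \<subseteq> range_on \<J> F"
  unfolding range_on_def by (rule closed_span_mono) blast

lemma range_on_invariant:
  assumes B: "bimodule \<E> \<J>" and A: "A \<in> nest_algebra \<E>"
  shows "A ` range_on \<J> E \<subseteq> range_on \<J> E"
proof -
  let ?S = "{T x | T x. T \<in> \<J> \<and> x \<in> E}"
  have "A ` ?S \<subseteq> ?S"
  proof
    fix w assume "w \<in> A ` ?S"
    then obtain T x where T: "T \<in> \<J>" "x \<in> E" "w = (A \<circ> T) x" by auto
    moreover have "A \<circ> T \<in> \<J>" using B A T(1) unfolding bimodule_def by blast
    ultimately show "w \<in> ?S" by blast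
  qed
  then have "closed_span (A ` ?S) \<subseteq> closed_span ?S" by (rule closed_span_mono)
  moreover have "A \<in> bounded_ops" using A unfolding nest_algebra_def by blast
  then have "A ` closed_span ?S \<subseteq> closed_span (A ` ?S)" by (rule bounded_ops_image_closed_span)
  ultimately show ?thesis unfolding range_on_def by (rule order_trans[rotated])
qed

lemma range_on_in_nest:
  assumes "nest \<E>" "bimodule \<E> \<J>"
  shows "range_on \<J> E \<in> \<E>"
proof (rule invariant_subspace_in_nest[OF assms(1)])
  show "closed (range_on \<J> E)" unfolding range_on_def by (rule closed_closed_span)
  show "csubspace (range_on \<J> E)" unfolding range_on_def by (rule csubspace_closed_span)
  show "\<forall>A\<in>nest_algebra \<E>. A ` range_on \<J> E \<subseteq> range_on \<J> E"
    using range_on_invariant[OF assms(2)] by blast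
qed

lemma range_on_join:
  assumes B: "bimodule \<E> \<J>"
  shows "join (range_on \<J> ` \<C>) = range_on \<J> (join \<C>)"
proof
  have "E \<subseteq> join \<C>" if "E \<in> \<C>" for E
    using that closed_span_superset unfolding join_def by blast
  then have "\<Union> (range_on \<J> ` \<C>) \<subseteq> range_on \<J> (join \<C>)"
    using range_on_mono by (metis UN_least)
  then show "join (range_on \<J> ` \<C>) \<subseteq> range_on \<J> (join \<C>)"
    unfolding join_def[of "range_on \<J> ` \<C>"] range_on_def[of _ "join \<C>"]
    by (rule closed_span_minimal[OF _ csubspace_closed_span closed_closed_span])
next
  let ?L = "join (range_on \<J> ` \<C>)"
  have L: "closed ?L" "csubspace ?L"
    unfolding join_def by (rule closed_closed_span, rule csubspace_closed_span)
  have "T x \<in> ?L" if T: "T \<in> \<J>" and x: "x \<in> join \<C>" for T x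
  proof -
    have "T ` \<Union>\<C> \<subseteq> \<Union> (range_on \<J> ` \<C>)"
    proof
      fix v assume "v \<in> T ` \<Union>\<C>"
      then obtain E u where Eu: "E \<in> \<C>" "u \<in> E" "v = T u" by blast
      have "{T x | T x. T \<in> \<J> \<and> x \<in> E} \<subseteq> range_on \<J> E"
        unfolding range_on_def by (rule closed_span_superset)
      then have "v \<in> range_on \<J> E" using T Eu(2,3) by blast
      then show "v \<in> \<Union> (range_on \<J> ` \<C>)" using Eu(1) by blast
    qed
    also have "\<dots> \<subseteq> ?L" unfolding join_def by (rule closed_span_superset)
    finally have "closed_span (T ` \<Union>\<C>) \<subseteq> ?L" by (rule closed_span_minimal[OF _ L(2) L(1)])
    moreover have "T \<in> bounded_ops" using B T unfolding bimodule_def by blast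
    then have "T ` join \<C> \<subseteq> closed_span (T ` \<Union>\<C>)"
      unfolding join_def by (rule bounded_ops_image_closed_span)
    ultimately show ?thesis using x by blast
  qed
  then have "{T x | T x. T \<in> \<J> \<and> x \<in> join \<C>} \<subseteq> ?L" by blast
  then show "range_on \<J> (join \<C>) \<subseteq> ?L"
    unfolding range_on_def[of _ "join \<C>"] by (rule closed_span_minimal[OF _ L(2) L(1)])
qed

theorem mainTheorem3:
  fixes \<E> :: "'a::complex_banach set set" and \<J> :: "('a \<Rightarrow> 'a) set"
  assumes "nest \<E>" and "bimodule \<E> \<J>"
  shows "(\<forall>E\<in>\<E>. range_on \<J> E \<in> \<E>) \<and> admissible \<E> (range_on \<J>)"
proof -
  have "support_function \<E> (range_on \<J>)"
    unfolding support_function_def using range_on_in_nest[OF assms] range_on_mono by blast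
  moreover have "join (range_on \<J> ` {E \<in> \<E>. E \<subset> N}) = range_on \<J> (pred_elem \<E> N)" for N
    unfolding pred_elem_def by (rule range_on_join[OF assms(2)])
  ultimately show ?thesis using range_on_in_nest[OF assms] unfolding admissible_def by blast
qed

end
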